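(* Let $n\ge 2$ and let $G$ be a graph on $2n+1$ vertices with at least $n^2+n$ edges that contains no two distinct vertices of the same degree joined by a path of length three. Let $\beta$ be the largest integer such that $G$ contains two distinct vertices of degree $\beta$. Then $\beta\le n+1$. Moreover, if $\beta=n+1$, then $G$ is isomorphic to $K_{n,n+1}$.
   Context: A path of length three joining vertices $a$ and $b$ is a path $a\,x\,y\,b$ with four distinct vertices and three edges. Graphs are finite and simple. *)

theory Defs
  imports Main
begin

definition simple_graph :: "'a set \<Rightarrow> ('a \<Rightarrow> 'a \<Rightarrow> bool) \<Rightarrow> bool" where
  "simple_graph V E \<longleftrightarrow> finite V \<and> (\<forall>x y. E x y \<longrightarrow> x \<in> V \<and> y \<in> V)
     \<and> (\<forall>x y. E x y \<longrightarrow> E y x) \<and> (\<forall>x. \<not> E x x)"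

definition degree :: "'a set \<Rightarrow> ('a \<Rightarrow> 'a \<Rightarrow> bool) \<Rightarrow> 'a \<Rightarrow> nat" where
  "degree V E v = card {u \<in> V. E v u}"

definition edge_set :: "'a set \<Rightarrow> ('a \<Rightarrow> 'a \<Rightarrow> bool) \<Rightarrow> 'a set set" where
  "edge_set V E = {{x, y} | x y. x \<in> V \<and> y \<in> V \<and> E x y}"

definition path3 :: "('a \<Rightarrow> 'a \<Rightarrow> bool) \<Rightarrow> 'a \<Rightarrow> 'a \<Rightarrow> bool" where
  "path3 E a b \<longleftrightarrow> (\<exists>x y. distinct [a, x, y, b] \<and> E a x \<and> E x y \<and> E y b)"

definition graph_iso :: "'a set \<Rightarrow> ('a \<Rightarrow> 'a \<Rightarrow> bool) \<Rightarrow> 'b set \<Rightarrow> ('b \<Rightarrow> 'b \<Rightarrow> bool) \<Rightarrow> bool" where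
  "graph_iso V E W F \<longleftrightarrow> (\<exists>f. bij_betw f V W \<and> (\<forall>x\<in>V. \<forall>y\<in>V. E x y \<longleftrightarrow> F (f x) (f y)))"

definition Kbip_V :: "nat \<Rightarrow> nat \<Rightarrow> (nat + nat) set" where
  "Kbip_V m k = Inl ` {..<m} \<union> Inr ` {..<k}"

definition Kbip_E :: "(nat + nat) \<Rightarrow> (nat + nat) \<Rightarrow> bool" where
  "Kbip_E u v \<longleftrightarrow> (isl u \<noteq> isl v)"

end

(*
  Let u, v be two vertices of degree beta >= n + 1. Since there is no path u x y v, no edge
  joins N(u) - {v} to N(v) - {u}. Split the other vertices into the private neighbourhoods
  P, Q, the common neighbourhood C and the rest W, and count ordered adjacent pairs (twice
  the number of edges) class by class; a vertex c of C has degree 2 + s(c), where s(c)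
  counts its neighbours in W.

  If u ~ v, two vertices c, c' of C are joined by the path c u v c', so the s(c) are
  distinct and sum to at most |W|(|W| + 1)/2. The count then forces P = {} and
  |C| = |W| + 1 = n, so some c in C has degree n + 1 = beta, and u c' v c is a path.

  If u, v are not adjacent, |C| >= |W| + 3, so some value of s repeats. Let m be the
  largest repeated value, attained at c and c'. No edge joins the W-neighbourhoods of c
  and c' (it would give a path c x y c'), so W spans at most |W|^2 - m^2 ordered pairs,
  while the values of s above m are distinct. The count then forces beta = n + 1,
  P = Q = {}, m = |W| and W independent: C and the n vertices outside it form K_{n,n+1}.
*)
theory Submission
  imports Defs
begin

lemma simple_graphD:
  assumes "simple_graph V E"
  shows "finite V" "E x y \<Longrightarrow> x \<in> V" "E x y \<Longrightarrow> y \<in> V" "E x y \<Longrightarrow> E y x" "\<not> E x x"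
  using assms unfolding simple_graph_def by blast+

definition neighbours :: "'a set \<Rightarrow> ('a \<Rightarrow> 'a \<Rightarrow> bool) \<Rightarrow> 'a \<Rightarrow> 'a set" where
  "neighbours V E x = {y \<in> V. E x y}"

definition arcs :: "'a set \<Rightarrow> ('a \<Rightarrow> 'a \<Rightarrow> bool) \<Rightarrow> ('a \<times> 'a) set" where
  "arcs V E = {(x, y) \<in> V \<times> V. E x y}"

lemma degree_eq_card_neighbours: "degree V E x = card (neighbours V E x)"
  unfolding degree_def neighbours_def ..

lemma finite_neighbours: "finite V \<Longrightarrow> finite (neighbours V E x)"
  unfolding neighbours_def by simp

lemma finite_arcs: "finite V \<Longrightarrow> finite (arcs V E)"
  unfolding arcs_def by (auto intro: finite_subset[of _ "V \<times> V"])

lemma card_arcs_eq_twice_card_edges: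
  assumes G: "simple_graph V E"
  shows "card (arcs V E) = 2 * card (edge_set V E)"
proof -
  have fin: "finite (arcs V E)" "finite (edge_set V E)"
    using simple_graphD(1)[OF G] finite_arcs
    by (auto simp: edge_set_def intro: finite_subset[of _ "Pow V"])
  have fibre: "card {a \<in> arcs V E. e = {fst a, snd a}} = 2" if e_in: "e \<in> edge_set V E" for e
  proof -
    obtain x y where e: "e = {x, y}" "x \<in> V" "y \<in> V" "E x y"
      using e_in unfolding edge_set_def by blast
    then have "{a \<in> arcs V E. e = {fst a, snd a}} = {(x, y), (y, x)}"
      using simple_graphD(4)[OF G] by (auto simp: arcs_def doubleton_eq_iff)
    then show ?thesis using e(4) simple_graphD(5)[OF G] by (metis card_2_iff prod.inject)
  qed
  have "card (arcs V E) = (\<Sum>a\<in>arcs V E. card {e \<in> edge_set V E. e = {fst a, snd a}})"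
  proof (rule card_eq_sum[THEN trans], rule sum.cong)
    fix a assume "a \<in> arcs V E"
    then have "{e \<in> edge_set V E. e = {fst a, snd a}} = {{fst a, snd a}}"
      by (fastforce simp: arcs_def edge_set_def)
    then show "1 = card {e \<in> edge_set V E. e = {fst a, snd a}}" by simp
  qed simp
  also have "\<dots> = 2 * card (edge_set V E)"
    by (rule sum_multicount) (use fin fibre in auto)
  finally show ?thesis .
qed

lemma card_arcs_within_le:
  assumes "simple_graph V E" and "finite D"
  shows "card (arcs V E \<inter> D \<times> D) \<le> card D * (card D - 1)"
proof -
  have "arcs V E \<inter> D \<times> D \<subseteq> Sigma D (\<lambda>x. D - {x})"
    using simple_graphD(5)[OF assms(1)] unfolding arcs_def by auto
  then have "card (arcs V E \<inter> D \<times> D) \<le> card (Sigma D (\<lambda>x. D - {x}))"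
    by (rule card_mono[rotated]) (use assms(2) in auto)
  also have "\<dots> = card D * (card D - 1)"
    using assms(2) by simp
  finally show ?thesis .
qed

definition no_path3_between_equal_degrees :: "'a set \<Rightarrow> ('a \<Rightarrow> 'a \<Rightarrow> bool) \<Rightarrow> bool" where
  "no_path3_between_equal_degrees V E \<longleftrightarrow>
     (\<forall>a\<in>V. \<forall>b\<in>V. a \<noteq> b \<and> degree V E a = degree V E b \<longrightarrow> \<not> path3 E a b)"

lemma degrees_differ_if_path3:
  assumes "no_path3_between_equal_degrees V E" and "a \<in> V" and "b \<in> V" and "a \<noteq> b" and "path3 E a b"
  shows "degree V E a \<noteq> degree V E b"
  using assms unfolding no_path3_between_equal_degrees_def by blast

lemma graph_iso_Kbip_if_complete_bipartite:
  assumes "finite V" and "B \<subseteq> V" and "card (V - B) = m" and "card B = k"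
    and "\<forall>a\<in>V. \<forall>b\<in>V. E a b \<longleftrightarrow> (a \<in> B) \<noteq> (b \<in> B)"
  shows "graph_iso V E (Kbip_V m k) Kbip_E"
proof -
  obtain g where g: "bij_betw g (V - B) {..<m}"
    using ex_bij_betw_finite_nat[of "V - B"] assms(1,3) by (auto simp: atLeast0LessThan)
  obtain h where h: "bij_betw h B {..<k}"
    using ex_bij_betw_finite_nat[of B] assms(1,2,4) finite_subset
    by (fastforce simp: atLeast0LessThan)
  define f where "f x = (if x \<in> B then Inr (h x) else Inl (g x))" for x
  have "bij_betw f (V - B) (Inl ` {..<m})"
    using bij_betw_trans[OF g bij_betw_imageI[of Inl]]
    by (rule bij_betw_cong[THEN iffD1, rotated]) (auto simp: f_def)
  moreover have "bij_betw f B (Inr ` {..<k})"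
    using bij_betw_trans[OF h bij_betw_imageI[of Inr]]
    by (rule bij_betw_cong[THEN iffD1, rotated]) (auto simp: f_def)
  ultimately have "bij_betw f ((V - B) \<union> B) (Kbip_V m k)"
    unfolding Kbip_V_def by (rule bij_betw_combine) auto
  moreover have "\<forall>x\<in>V. \<forall>y\<in>V. E x y \<longleftrightarrow> Kbip_E (f x) (f y)"
    using assms(5) by (simp add: Kbip_E_def f_def)
  ultimately show ?thesis
    unfolding graph_iso_def using assms(2) by (metis Un_Diff_cancel2 sup.absorb1)
qed

lemma card_Union_list_le: "card (\<Union> (set As)) \<le> sum_list (map card As)"
proof (induction As)
  case (Cons A As)
  then show ?case using card_Un_le[of A "\<Union> (set As)"] by simp
qed simp

lemma sum_distinct_bounded_le:
  fixes f :: "'b \<Rightarrow> nat"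
  assumes "finite A" and "inj_on f A" and "\<forall>x\<in>A. f x \<le> d"
  shows "2 * sum f A \<le> d * (d + 1)"
proof -
  have "sum f A = \<Sum>(f ` A)"
    using sum.reindex[OF assms(2), of id] by simp
  also have "\<dots> \<le> \<Sum>{0..d}"
    by (rule sum_mono2) (use assms(3) in auto)
  finally show ?thesis
    using gauss_sum_nat[of d] by simp
qed

lemma sum_le_largest_repeated_value:
  fixes f :: "'b \<Rightarrow> nat"
  assumes "finite A" and "\<forall>x\<in>A. f x \<le> w" and "\<not> inj_on f A"
  obtains a b where "a \<in> A" "b \<in> A" "a \<noteq> b" "f a = f b"
    and "2 * sum f A \<le> 2 * card A * f a + (w - f a) * (w - f a + 1)"
proof -
  define R where "R = {f a | a b. a \<in> A \<and> b \<in> A \<and> a \<noteq> b \<and> f a = f b}"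
  have "finite R" "R \<noteq> {}"
    using assms(1,3) unfolding R_def inj_on_def by (auto intro: finite_subset[of _ "f ` A"])
  define m where "m = Max R"
  obtain a b where ab: "a \<in> A" "b \<in> A" "a \<noteq> b" "f a = f b" "f a = m"
    using Max_in[OF \<open>finite R\<close> \<open>R \<noteq> {}\<close>] unfolding m_def R_def by auto
  define T where "T = {x \<in> A. m < f x}"
  have "inj_on (\<lambda>x. f x - m) T"
  proof (rule inj_onI, rule ccontr)
    fix x y assume "x \<in> T" "y \<in> T" "f x - m = f y - m" "x \<noteq> y"
    then have "f x = f y" "m < f x"
      unfolding T_def by auto
    then have "f x \<in> R" "m < f x"
      using \<open>x \<in> T\<close> \<open>y \<in> T\<close> \<open>x \<noteq> y\<close> unfolding R_def T_def by blast+
    then show False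
      using Max_ge[OF \<open>finite R\<close>] unfolding m_def by fastforce
  qed
  then have "2 * (\<Sum>x\<in>T. f x - m) \<le> (w - m) * (w - m + 1)"
    by (rule sum_distinct_bounded_le[rotated]) (use assms(1,2) in \<open>auto simp: T_def\<close>)
  moreover have "sum f A \<le> card A * m + (\<Sum>x\<in>T. f x - m)"
  proof -
    have "sum f A \<le> (\<Sum>x\<in>A. m + (f x - m))"
      by (rule sum_mono) simp
    also have "(\<Sum>x\<in>A. f x - m) = (\<Sum>x\<in>T. f x - m)"
      by (rule sum.mono_neutral_right) (use assms(1) in \<open>auto simp: T_def\<close>)
    ultimately show ?thesis
      by (simp add: sum.distrib)
  qed
  ultimately show thesis
    using that[OF ab(1-4)] ab(5) by simp
qed

lemma adjacent_count_arith:
  fixes n k p c w :: nat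
  assumes "2 * (n ^ 2 + n) \<le> 4 * k + 2 + 2 * (p * (p - 1)) + 4 * p * w + 2 * w ^ 2"
    and "k = p + c" and "c \<le> w + 1" and "2 * n + 1 = 2 + 2 * p + c + w" and "n \<le> k" and "2 \<le> n"
  shows "p = 0 \<and> k = n \<and> c = w + 1"
proof -
  have k: "k = n" "c = w + 1" "n = p + w + 1"
    using assms(2-5) by linarith+
  have "p * (p - 1) + p = p * p"
    by (cases p) simp_all
  then have "2 * (n ^ 2 + n) + 2 * p \<le> 4 * n + 2 + 2 * (p * p) + 4 * p * w + 2 * w ^ 2"
    using assms(1) k(1) by linarith
  then have "2 * p + w \<le> 1"
    unfolding k(3) by (simp add: power2_eq_square algebra_simps)
  then show ?thesis
    using k assms(6) by simp
qed

lemma nonadjacent_count_arith: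
  fixes n b p c w m :: nat
  assumes "2 * (n ^ 2 + n) \<le> 4 * b + 2 * (p * (p - 1)) + 4 * p * w + 2 * c * m
      + (w - m) * (w - m + 1) + (w * w - m * m)"
    and "m \<le> w" and "b = p + c" and "2 * n + 1 = 2 + 2 * p + c + w" and "n + 1 \<le> b"
  shows "b = n + 1 \<and> p = 0 \<and> m = w"
proof -
  obtain t d where td: "b = n + 1 + t" "w = m + d"
    using assms(2,5) le_Suc_ex by (metis add.commute)
  then have n: "n = 2 + p + t + m + d" and c: "c = 3 + 2 * t + m + d"
    using assms(3,4) by linarith+
  have "p * (p - 1) + p = p * p"
    by (cases p) simp_all
  moreover have "w * w - m * m = d * (2 * m + d)"
    using td(2) by (simp add: algebra_simps)
  ultimately have "2 * (n ^ 2 + n) + 2 * p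
      \<le> 4 * b + 2 * (p * p) + 4 * p * w + 2 * c * m + d * (d + 1) + d * (2 * m + d)"
    using assms(1) td(2) by simp
  then have "2 * t * (t + 1) + 2 * p * (2 * t + 4) + d * (4 * t + 5) = 0"
    unfolding n c td by (simp add: power2_eq_square algebra_simps)
  then show ?thesis
    using td by simp
qed

locale path3_free_pair =
  fixes V :: "'a set" and E :: "'a \<Rightarrow> 'a \<Rightarrow> bool" and u v :: 'a
  assumes graph: "simple_graph V E"
    and u_in_V: "u \<in> V" and v_in_V: "v \<in> V" and u_ne_v: "u \<noteq> v"
    and no_path3: "\<not> path3 E u v"
begin

lemmas finite_V = simple_graphD(1)[OF graph]
  and edge_sym = simple_graphD(4)[OF graph]
  and no_loop = simple_graphD(5)[OF graph]

definition "X = neighbours V E u - {v}"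
definition "Y = neighbours V E v - {u}"
definition "C = X \<inter> Y"
definition "P = X - Y"
definition "Q = Y - X"
definition "W = V - {u, v} - X - Y"
definition "W_nbrs c = neighbours V E c \<inter> W"
definition "W_degree c = card (W_nbrs c)"

lemmas parts_def = X_def Y_def C_def P_def Q_def W_def

lemma parts_subset_V: "X \<subseteq> V" "Y \<subseteq> V" "C \<subseteq> V" "P \<subseteq> V" "Q \<subseteq> V" "W \<subseteq> V"
  unfolding parts_def neighbours_def by auto

lemma finite_parts: "finite X" "finite Y" "finite C" "finite P" "finite Q" "finite W"
  using parts_subset_V finite_V by (auto intro: finite_subset)

lemma finite_W_nbrs: "finite (W_nbrs c)" and W_nbrs_subset: "W_nbrs c \<subseteq> W"
  using finite_parts(6) unfolding W_nbrs_def by auto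

lemma W_degree_le: "W_degree c \<le> card W"
  unfolding W_degree_def by (rule card_mono[OF finite_parts(6) W_nbrs_subset])

lemma u_v_notin_parts: "u \<notin> X" "u \<notin> Y" "v \<notin> X" "v \<notin> Y" "u \<notin> W" "v \<notin> W"
  unfolding parts_def neighbours_def using no_loop by auto

lemma no_edge_X_Y:
  assumes "x \<in> X" and "y \<in> Y"
  shows "\<not> E x y"
proof
  assume "E x y"
  moreover have "distinct [u, x, y, v]"
    using assms u_ne_v no_loop[of x] no_loop[of u] no_loop[of v] \<open>E x y\<close>
    unfolding X_def Y_def neighbours_def by auto
  moreover have "E u x" "E y v"
    using assms edge_sym unfolding X_def Y_def neighbours_def by auto
  ultimately show False
    using no_path3 unfolding path3_def by blast
qed

lemma card_X: "card X = card P + card C"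
proof -
  have "X = P \<union> C" "P \<inter> C = {}"
    unfolding P_def C_def by auto
  then show ?thesis
    using card_Un_disjoint[OF finite_parts(4,3)] by simp
qed

lemma card_Y: "card Y = card Q + card C"
proof -
  have "Y = Q \<union> C" "Q \<inter> C = {}"
    unfolding Q_def C_def by auto
  then show ?thesis
    using card_Un_disjoint[OF finite_parts(5,3)] by simp
qed

lemma V_minus_u_v: "V - {u, v} = P \<union> Q \<union> C \<union> W"
  using parts_subset_V(1,2) u_v_notin_parts unfolding P_def Q_def C_def W_def by blast

lemma card_V: "card V = 2 + card P + card Q + card C + card W"
proof -
  have V: "{u, v} \<union> P \<union> Q \<union> C \<union> W = V"
    using u_in_V v_in_V parts_subset_V(1,2) unfolding P_def Q_def C_def W_def by blast
  have "{u, v} \<inter> P = {}" "({u, v} \<union> P) \<inter> Q = {}" "({u, v} \<union> P \<union> Q) \<inter> C = {}"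
    "({u, v} \<union> P \<union> Q \<union> C) \<inter> W = {}"
    using u_v_notin_parts unfolding P_def Q_def C_def W_def by blast+
  then have "card ({u, v} \<union> P \<union> Q \<union> C \<union> W) = 2 + card P + card Q + card C + card W"
    using u_ne_v finite_parts by (simp add: card_Un_disjoint)
  then show ?thesis
    by (simp only: V)
qed

lemma degree_u: "degree V E u = card X + (if E u v then 1 else 0)"
proof -
  have "neighbours V E u = (if E u v then insert v X else X)"
    using v_in_V unfolding X_def neighbours_def by auto
  then show ?thesis
    using finite_parts u_v_notin_parts unfolding degree_eq_card_neighbours by simp
qed

lemma degree_v: "degree V E v = card Y + (if E u v then 1 else 0)"
proof -
  have "neighbours V E v = (if E u v then insert u Y else Y)"
    using u_in_V edge_sym unfolding Y_def neighbours_def by auto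
  then show ?thesis
    using finite_parts u_v_notin_parts unfolding degree_eq_card_neighbours by simp
qed

lemma neighbours_C:
  assumes "c \<in> C"
  shows "neighbours V E c = {u, v} \<union> W_nbrs c"
proof
  show "neighbours V E c \<subseteq> {u, v} \<union> W_nbrs c"
  proof
    fix x assume x: "x \<in> neighbours V E c"
    then have "x \<notin> X" "x \<notin> Y"
      using assms no_edge_X_Y edge_sym unfolding C_def neighbours_def by blast+
    then show "x \<in> {u, v} \<union> W_nbrs c"
      using x unfolding W_nbrs_def W_def neighbours_def by blast
  qed
  have "E c u" "E c v"
    using assms edge_sym unfolding C_def X_def Y_def neighbours_def by auto
  then show "{u, v} \<union> W_nbrs c \<subseteq> neighbours V E c"
    using u_in_V v_in_V unfolding W_nbrs_def neighbours_def by blast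
qed

lemma degree_C:
  assumes "c \<in> C"
  shows "degree V E c = 2 + W_degree c"
proof -
  have "u \<notin> W_nbrs c" "v \<notin> W_nbrs c"
    using W_nbrs_subset u_v_notin_parts(5,6) by blast+
  then show ?thesis
    using u_ne_v finite_W_nbrs
    unfolding degree_eq_card_neighbours neighbours_C[OF assms] W_degree_def by simp
qed

lemma arc_within_V_minus_u_v_cases:
  assumes "E x y" and "x \<in> V - {u, v}" and "y \<in> V - {u, v}"
  shows "x \<in> P \<and> y \<in> P \<or> x \<in> Q \<and> y \<in> Q \<or> x \<in> W \<and> y \<in> W \<or> x \<in> P \<union> Q \<and> y \<in> W
    \<or> x \<in> W \<and> y \<in> P \<union> Q \<or> x \<in> C \<and> y \<in> W \<or> x \<in> W \<and> y \<in> C"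
proof -
  have xy: "x \<in> P \<union> Q \<union> C \<union> W" "y \<in> P \<union> Q \<union> C \<union> W"
    using assms(2,3) unfolding V_minus_u_v .
  have "P \<subseteq> X - Y" "Q \<subseteq> Y - X" "C \<subseteq> X \<inter> Y" "W \<inter> (X \<union> Y) = {}"
    unfolding parts_def by blast+
  moreover have "x \<in> X \<Longrightarrow> y \<notin> Y" "x \<in> Y \<Longrightarrow> y \<notin> X"
    using no_edge_X_Y assms(1) edge_sym by blast+
  ultimately show ?thesis
    using xy by blast
qed

definition "arc_pieces =
  [{u} \<times> neighbours V E u, {v} \<times> neighbours V E v, X \<times> {u}, Y \<times> {v},
   arcs V E \<inter> P \<times> P, arcs V E \<inter> Q \<times> Q, (P \<union> Q) \<times> W, W \<times> (P \<union> Q),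
   Sigma C W_nbrs, prod.swap ` Sigma C W_nbrs, arcs V E \<inter> W \<times> W]"

lemma arc_within_V_minus_u_v_in_arc_pieces:
  assumes "(x, y) \<in> arcs V E" and "x \<in> V - {u, v}" and "y \<in> V - {u, v}"
  shows "(x, y) \<in> \<Union> (set arc_pieces)"
proof -
  have "E x y"
    using assms(1) unfolding arcs_def by simp
  from arc_within_V_minus_u_v_cases[OF this assms(2,3)] show ?thesis
  proof (elim disjE conjE)
    assume "x \<in> P" "y \<in> P"
    then show ?thesis
      using assms(1) by (intro UnionI[of "arcs V E \<inter> P \<times> P"]) (auto simp: arc_pieces_def)
  next
    assume "x \<in> Q" "y \<in> Q"
    then show ?thesis
      using assms(1) by (intro UnionI[of "arcs V E \<inter> Q \<times> Q"]) (auto simp: arc_pieces_def)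
  next
    assume "x \<in> W" "y \<in> W"
    then show ?thesis
      using assms(1) by (intro UnionI[of "arcs V E \<inter> W \<times> W"]) (auto simp: arc_pieces_def)
  next
    assume "x \<in> P \<union> Q" "y \<in> W"
    then show ?thesis
      by (intro UnionI[of "(P \<union> Q) \<times> W"]) (auto simp: arc_pieces_def)
  next
    assume "x \<in> W" "y \<in> P \<union> Q"
    then show ?thesis
      by (intro UnionI[of "W \<times> (P \<union> Q)"]) (auto simp: arc_pieces_def)
  next
    assume "x \<in> C" "y \<in> W"
    then show ?thesis
      using \<open>E x y\<close> parts_subset_V(6)
      by (intro UnionI[of "Sigma C W_nbrs"]) (auto simp: arc_pieces_def W_nbrs_def neighbours_def)
  next
    assume "x \<in> W" "y \<in> C"
    then have "(y, x) \<in> Sigma C W_nbrs"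
      using \<open>E x y\<close> edge_sym parts_subset_V(6) by (auto simp: W_nbrs_def neighbours_def)
    then show ?thesis
      by (intro UnionI[of "prod.swap ` Sigma C W_nbrs"]) (auto simp: arc_pieces_def)
  qed
qed

lemma arcs_subset_arc_pieces: "arcs V E \<subseteq> \<Union> (set arc_pieces)"
proof (rule subsetI)
  fix a assume a_arc: "a \<in> arcs V E"
  then obtain x y where a: "a = (x, y)" "x \<in> V" "y \<in> V" "E x y"
    unfolding arcs_def by auto
  consider "x = u" | "x = v" | "y = u" "x \<noteq> v" | "y = v" "x \<noteq> u" | "x \<in> V - {u, v}" "y \<in> V - {u, v}"
    using a(2,3) by blast
  then show "a \<in> \<Union> (set arc_pieces)"
  proof cases
    case 1
    then show ?thesis
      using a by (intro UnionI[of "{u} \<times> neighbours V E u"]) (auto simp: arc_pieces_def neighbours_def)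
  next
    case 2
    then show ?thesis
      using a by (intro UnionI[of "{v} \<times> neighbours V E v"]) (auto simp: arc_pieces_def neighbours_def)
  next
    case 3
    then have "x \<in> X"
      using a edge_sym unfolding X_def neighbours_def by auto
    then show ?thesis
      using 3 a(1) by (intro UnionI[of "X \<times> {u}"]) (auto simp: arc_pieces_def)
  next
    case 4
    then have "x \<in> Y"
      using a edge_sym unfolding Y_def neighbours_def by auto
    then show ?thesis
      using 4 a(1) by (intro UnionI[of "Y \<times> {v}"]) (auto simp: arc_pieces_def)
  next
    case 5
    then show ?thesis
      using arc_within_V_minus_u_v_in_arc_pieces a_arc a(1) by blast
  qed
qed

lemma card_arcs_le:
  "card (arcs V E) \<le> degree V E u + degree V E v + card X + card Y
     + card P * (card P - 1) + card Q * (card Q - 1) + 2 * (card P + card Q) * card W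
     + 2 * (\<Sum>c\<in>C. W_degree c) + card (arcs V E \<inter> W \<times> W)"
  (is "_ \<le> ?rhs")
proof -
  have "card (arcs V E) \<le> card (\<Union> (set arc_pieces))"
    using arcs_subset_arc_pieces
    by (rule card_mono[rotated])
      (simp add: arc_pieces_def finite_parts finite_arcs finite_V finite_W_nbrs finite_neighbours)
  also have "\<dots> \<le> sum_list (map card arc_pieces)"
    by (rule card_Union_list_le)
  also have "\<dots> \<le> ?rhs"
  proof -
    have "card (prod.swap ` Sigma C W_nbrs) = (\<Sum>c\<in>C. W_degree c)"
      by (simp add: card_image finite_parts finite_W_nbrs W_degree_def)
    moreover have "card (Sigma C W_nbrs) = (\<Sum>c\<in>C. W_degree c)"
      by (simp add: finite_parts finite_W_nbrs W_degree_def)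
    moreover have "card (P \<union> Q) = card P + card Q"
      by (rule card_Un_disjoint) (auto simp: finite_parts P_def Q_def)
    moreover have "card (arcs V E \<inter> P \<times> P) \<le> card P * (card P - 1)"
      "card (arcs V E \<inter> Q \<times> Q) \<le> card Q * (card Q - 1)"
      using card_arcs_within_le[OF graph] finite_parts by blast+
    ultimately show ?thesis
      unfolding arc_pieces_def by (simp add: card_cartesian_product degree_eq_card_neighbours)
        (simp add: distrib_left distrib_right)
  qed
  finally show ?thesis .
qed

lemma card_Y_Q_if_equal_degrees:
  assumes "degree V E u = degree V E v"
  shows "card Y = card X" and "card Q = card P"
  using assms degree_u degree_v card_X card_Y by simp_all

lemma card_arcs_le_if_equal_degrees:
  assumes "degree V E u = degree V E v"
  shows "card (arcs V E) \<le> 2 * degree V E u + 2 * card X + 2 * (card P * (card P - 1))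
    + 4 * card P * card W + 2 * (\<Sum>c\<in>C. W_degree c) + card (arcs V E \<inter> W \<times> W)"
  using card_arcs_le card_Y_Q_if_equal_degrees[OF assms] assms by simp

lemma card_C_le_if_inj_on_W_degree:
  assumes "inj_on W_degree C"
  shows "card C \<le> card W + 1"
proof -
  have "card C = card (W_degree ` C)"
    using assms by (simp add: card_image)
  also have "\<dots> \<le> card {0..card W}"
    by (rule card_mono) (auto simp: W_degree_le)
  finally show ?thesis
    by simp
qed

lemma path3_X_Y_if_adjacent:
  assumes "E u v" and "x \<in> X" and "y \<in> Y" and "x \<noteq> y"
  shows "path3 E x y"
  unfolding path3_def
proof (intro exI conjI)
  show "distinct [x, u, v, y]"
    using assms u_ne_v u_v_notin_parts by auto
  show "E x u" "E u v" "E v y"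
    using assms edge_sym unfolding X_def Y_def neighbours_def by auto
qed

lemma path3_u_Y_via_C:
  assumes "c \<in> C" and "y \<in> Y" and "c \<noteq> y"
  shows "path3 E u y"
  unfolding path3_def
proof (intro exI conjI)
  show "distinct [u, c, v, y]"
    using assms u_ne_v u_v_notin_parts unfolding C_def by auto
  show "E u c" "E c v" "E v y"
    using assms edge_sym unfolding C_def X_def Y_def neighbours_def by auto
qed

lemma inj_on_W_degree_if_adjacent:
  assumes "E u v" and "no_path3_between_equal_degrees V E"
  shows "inj_on W_degree C"
proof (rule inj_onI, rule ccontr)
  fix a b assume a: "a \<in> C" and b: "b \<in> C" and "W_degree a = W_degree b" and "a \<noteq> b"
  then have "degree V E a = degree V E b"
    by (simp add: degree_C)
  moreover have "path3 E a b"
    using path3_X_Y_if_adjacent assms(1) a b \<open>a \<noteq> b\<close> unfolding C_def by blast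
  ultimately show False
    using degrees_differ_if_path3[OF assms(2)] a b \<open>a \<noteq> b\<close> parts_subset_V(3) by blast
qed

lemma adjacent_sizes:
  assumes "E u v" and "no_path3_between_equal_degrees V E" and "degree V E u = degree V E v"
    and "2 \<le> n" and "card V = 2 * n + 1" and "2 * (n ^ 2 + n) \<le> card (arcs V E)"
    and "n + 1 \<le> degree V E u"
  shows "card P = 0" and "card X = n" and "card C = card W + 1"
proof -
  define p c w k where "p = card P" and "c = card C" and "w = card W" and "k = card X"
  note sizes = p_def c_def w_def k_def
  have inj: "inj_on W_degree C"
    using inj_on_W_degree_if_adjacent assms(1,2) .
  have k: "k = p + c" and n: "2 * n + 1 = 2 + 2 * p + c + w"
    using assms(3,5) card_X card_V card_Y_Q_if_equal_degrees unfolding sizes by simp_all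
  have "2 * (\<Sum>c\<in>C. W_degree c) \<le> w * (w + 1)"
    using sum_distinct_bounded_le[OF finite_parts(3) inj] W_degree_le unfolding sizes by blast
  moreover have "card (arcs V E \<inter> W \<times> W) \<le> w * (w - 1)"
    using card_arcs_within_le[OF graph finite_parts(6)] unfolding sizes .
  moreover have "w * (w + 1) + w * (w - 1) = 2 * w ^ 2"
    by (cases w) (simp_all add: power2_eq_square algebra_simps)
  moreover have "degree V E u = k + 1"
    using assms(1) degree_u unfolding sizes by simp
  ultimately have "2 * (n ^ 2 + n) \<le> 4 * k + 2 + 2 * (p * (p - 1)) + 4 * p * w + 2 * w ^ 2"
    using assms(6) card_arcs_le_if_equal_degrees[OF assms(3)] unfolding sizes by linarith
  then show "card P = 0" "card X = n" "card C = card W + 1"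
    using adjacent_count_arith[OF _ k card_C_le_if_inj_on_W_degree[OF inj, folded sizes] n]
      assms(4,7) degree_u assms(1)
    unfolding sizes by auto
qed

lemma adjacent_impossible:
  assumes "E u v" and "no_path3_between_equal_degrees V E" and "degree V E u = degree V E v"
    and "2 \<le> n" and "card V = 2 * n + 1" and "2 * (n ^ 2 + n) \<le> card (arcs V E)"
    and "n + 1 \<le> degree V E u"
  shows False
proof -
  note sizes = adjacent_sizes[OF assms]
  have "W_degree ` C = {0..card W}"
    using W_degree_le inj_on_W_degree_if_adjacent[OF assms(1,2)] sizes(3)
    by (intro card_subset_eq) (auto simp: card_image)
  then obtain c where c: "c \<in> C" "W_degree c = card W"
    by (metis atLeastAtMost_iff image_iff order_refl zero_le)
  have "2 \<le> card C"
    using sizes card_X assms(4) by simp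
  then obtain c' where c': "c' \<in> C" "c' \<noteq> c"
    by (metis card_le_Suc0_iff_eq finite_parts(3) not_less_eq_eq numeral_2_eq_2)
  have "degree V E u = degree V E c"
    using degree_C[OF c(1)] c(2) degree_u assms(1) sizes card_X by simp
  moreover have "path3 E u c"
    using path3_u_Y_via_C c'(1) c(1) c'(2) unfolding C_def by blast
  moreover have "u \<noteq> c" "c \<in> V"
    using c(1) u_v_notin_parts parts_subset_V(3) unfolding C_def by auto
  ultimately show False
    using degrees_differ_if_path3[OF assms(2) u_in_V] by blast
qed

lemma card_arcs_W_le:
  assumes "no_path3_between_equal_degrees V E" and "a \<in> V - W" and "b \<in> V - W" and "a \<noteq> b"
    and "degree V E a = degree V E b"
  shows "card (arcs V E \<inter> W \<times> W) \<le> card W * card W - W_degree a * W_degree b"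
proof -
  have "arcs V E \<inter> W \<times> W \<subseteq> W \<times> W - W_nbrs a \<times> W_nbrs b"
  proof (safe)
    fix x y assume "(x, y) \<in> arcs V E" "x \<in> W_nbrs a" "y \<in> W_nbrs b"
    then have "path3 E a b"
      unfolding path3_def arcs_def W_nbrs_def neighbours_def
      using assms(2-4) edge_sym no_loop by (intro exI[of _ x] exI[of _ y]) auto
    then show False
      using degrees_differ_if_path3[OF assms(1)] assms(2-5) by blast
  qed
  then have "card (arcs V E \<inter> W \<times> W) \<le> card (W \<times> W - W_nbrs a \<times> W_nbrs b)"
    by (rule card_mono[rotated]) (simp add: finite_parts)
  also have "\<dots> = card W * card W - W_degree a * W_degree b"
    using W_nbrs_subset finite_W_nbrs
    by (subst card_Diff_subset) (auto simp: card_cartesian_product W_degree_def)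
  finally show ?thesis .
qed

lemma nonadjacent_sizes:
  assumes "\<not> E u v" and "no_path3_between_equal_degrees V E" and "degree V E u = degree V E v"
    and "card V = 2 * n + 1" and "2 * (n ^ 2 + n) \<le> card (arcs V E)" and "n + 1 \<le> degree V E u"
  shows "degree V E u = n + 1" and "card P = 0" and "card (arcs V E \<inter> W \<times> W) = 0"
    and "card C * card W \<le> (\<Sum>c\<in>C. W_degree c)"
proof -
  define p c w b where "p = card P" and "c = card C" and "w = card W" and "b = degree V E u"
  note sizes = p_def c_def w_def b_def
  have b: "b = p + c" and n: "2 * n + 1 = 2 + 2 * p + c + w"
    using assms(1,3,4) degree_u card_X card_V card_Y_Q_if_equal_degrees unfolding sizes by simp_all
  then have "\<not> inj_on W_degree C"
    using card_C_le_if_inj_on_W_degree assms(6) unfolding sizes by fastforce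
  then obtain a1 a2 where a: "a1 \<in> C" "a2 \<in> C" "a1 \<noteq> a2" "W_degree a1 = W_degree a2"
    and sum_le: "2 * (\<Sum>c\<in>C. W_degree c)
      \<le> 2 * c * W_degree a1 + (w - W_degree a1) * (w - W_degree a1 + 1)"
    using sum_le_largest_repeated_value[OF finite_parts(3)] W_degree_le unfolding sizes by metis
  define m where "m = W_degree a1"
  have "C \<subseteq> V - W"
    using parts_subset_V(3) unfolding C_def W_def by blast
  then have W_arcs: "card (arcs V E \<inter> W \<times> W) \<le> w * w - m * m"
    using card_arcs_W_le[OF assms(2), of a1 a2] a degree_C unfolding m_def sizes by auto
  have "card X = b"
    using assms(1) degree_u unfolding sizes by simp
  then have "2 * (n ^ 2 + n) \<le> 4 * b + 2 * (p * (p - 1)) + 4 * p * w + 2 * c * m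
      + (w - m) * (w - m + 1) + (w * w - m * m)"
    using assms(5) card_arcs_le_if_equal_degrees[OF assms(3)] sum_le W_arcs
    unfolding m_def sizes by linarith
  then have "b = n + 1 \<and> p = 0 \<and> m = w"
    by (rule nonadjacent_count_arith[OF _ _ b n])
      (use assms(6) W_degree_le in \<open>auto simp: m_def sizes\<close>)
  then have "b = n + 1" "p = 0" "m = w"
    by auto
  then show "degree V E u = n + 1" "card P = 0" and W_arcs_0: "card (arcs V E \<inter> W \<times> W) = 0"
    using W_arcs unfolding sizes by auto
  have "c = w + 3" "n = w + 2"
    using b n \<open>b = n + 1\<close> \<open>p = 0\<close> by simp_all
  moreover have "2 * (n ^ 2 + n) \<le> 4 * b + 2 * (\<Sum>c\<in>C. W_degree c)"
    using assms(5) card_arcs_le_if_equal_degrees[OF assms(3)] \<open>card X = b\<close> \<open>p = 0\<close> W_arcs_0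
    unfolding sizes by simp
  ultimately show "card C * card W \<le> (\<Sum>c\<in>C. W_degree c)"
    using \<open>b = n + 1\<close> unfolding sizes by (simp add: power2_eq_square algebra_simps)
qed

lemma complete_bipartite_if_saturated:
  assumes "\<not> E u v" and "P = {}" and "Q = {}" and "arcs V E \<inter> W \<times> W = {}"
    and "\<forall>c\<in>C. W_nbrs c = W"
  shows "\<forall>a\<in>V. \<forall>b\<in>V. E a b \<longleftrightarrow> (a \<in> C) \<noteq> (b \<in> C)"
proof -
  have XY: "X = C" "Y = C"
    using assms(2,3) unfolding parts_def by auto
  have "W \<inter> C = {}"
    unfolding W_def C_def by blast
  have to_C: "E u x \<Longrightarrow> x \<in> V \<Longrightarrow> x \<in> C" "E v x \<Longrightarrow> x \<in> V \<Longrightarrow> x \<in> C" for x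
    using assms(1) XY edge_sym unfolding X_def Y_def neighbours_def by auto
  have V_minus_C: "V - C = {u, v} \<union> W"
    using V_minus_u_v assms(2,3) u_in_V v_in_V u_v_notin_parts XY \<open>W \<inter> C = {}\<close> by auto
  have C_side: "neighbours V E c = V - C" if "c \<in> C" for c
    using neighbours_C[OF that] assms(5) that V_minus_C by simp
  have other_side: "neighbours V E a \<subseteq> C" if "a \<in> V - C" for a
  proof
    fix b assume b: "b \<in> neighbours V E a"
    then have "E a b" "b \<in> V" "a \<in> V"
      using that unfolding neighbours_def by auto
    show "b \<in> C"
    proof (cases "a \<in> W")
      case True
      then have "b \<notin> W"
        using assms(4) \<open>E a b\<close> \<open>b \<in> V\<close> \<open>a \<in> V\<close> unfolding arcs_def by auto
      moreover have "b \<noteq> u" "b \<noteq> v"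
        using to_C that edge_sym \<open>E a b\<close> \<open>a \<in> V\<close> by blast+
      ultimately show ?thesis
        using \<open>b \<in> V\<close> V_minus_C by blast
    next
      case False
      then have "a = u \<or> a = v"
        using that V_minus_C by blast
      then show ?thesis
        using to_C \<open>E a b\<close> \<open>b \<in> V\<close> by auto
    qed
  qed
  show ?thesis
  proof (intro ballI)
    fix a b assume "a \<in> V" "b \<in> V"
    then show "E a b \<longleftrightarrow> (a \<in> C) \<noteq> (b \<in> C)"
      using C_side other_side edge_sym unfolding neighbours_def by blast
  qed
qed

lemma nonadjacent_complete_bipartite:
  assumes "\<not> E u v" and "no_path3_between_equal_degrees V E" and "degree V E u = degree V E v"
    and "card V = 2 * n + 1" and "2 * (n ^ 2 + n) \<le> card (arcs V E)" and "n + 1 \<le> degree V E u"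
  shows "graph_iso V E (Kbip_V n (n + 1)) Kbip_E"
proof -
  note sizes = nonadjacent_sizes[OF assms]
  have empty: "P = {}" "Q = {}" "arcs V E \<inter> W \<times> W = {}"
    using sizes(2,3) card_Y_Q_if_equal_degrees(2)[OF assms(3)] finite_parts finite_arcs[OF finite_V]
    by auto
  have "(\<Sum>c\<in>C. W_degree c) = (\<Sum>c\<in>C. card W)"
    using sizes(4) sum_bounded_above[of C W_degree "card W"] W_degree_le by (simp add: mult.commute)
  then have "W_degree c = card W" if "c \<in> C" for c
    using sum_mono_inv[of W_degree C "\<lambda>_. card W"] W_degree_le that finite_parts(3) by blast
  then have "\<forall>c\<in>C. W_nbrs c = W"
    using card_subset_eq[OF finite_parts(6) W_nbrs_subset] unfolding W_degree_def by blast
  then have "\<forall>a\<in>V. \<forall>b\<in>V. E a b \<longleftrightarrow> (a \<in> C) \<noteq> (b \<in> C)"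
    using complete_bipartite_if_saturated assms(1) empty by blast
  moreover have "card C = n + 1"
    using sizes(1,2) degree_u card_X assms(1) by simp
  moreover have "card (V - C) = n"
    using \<open>card C = n + 1\<close> assms(4) parts_subset_V(3) finite_parts(3)
    by (simp add: card_Diff_subset)
  ultimately show ?thesis
    using graph_iso_Kbip_if_complete_bipartite[OF finite_V parts_subset_V(3)] by blast
qed

lemma degree_eq_and_complete_bipartite:
  assumes "no_path3_between_equal_degrees V E" and "degree V E u = degree V E v"
    and "2 \<le> n" and "card V = 2 * n + 1" and "2 * (n ^ 2 + n) \<le> card (arcs V E)"
    and "n + 1 \<le> degree V E u"
  shows "degree V E u = n + 1 \<and> graph_iso V E (Kbip_V n (n + 1)) Kbip_E"
proof (cases "E u v")
  case True
  then show ?thesis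
    using adjacent_impossible assms by blast
next
  case False
  then show ?thesis
    using nonadjacent_sizes(1) nonadjacent_complete_bipartite assms(1,2,4-6) by blast
qed

end

theorem lemma2p2:
  fixes V :: "'a set" and E :: "'a \<Rightarrow> 'a \<Rightarrow> bool" and n \<beta> :: nat
  assumes "n \<ge> 2"
    and "simple_graph V E"
    and "card V = 2 * n + 1"
    and "card (edge_set V E) \<ge> n ^ 2 + n"
    and "\<forall>a\<in>V. \<forall>b\<in>V. a \<noteq> b \<and> degree V E a = degree V E b \<longrightarrow> \<not> path3 E a b"
    and "\<exists>a\<in>V. \<exists>b\<in>V. a \<noteq> b \<and> degree V E a = \<beta> \<and> degree V E b = \<beta>"
    and "\<forall>d. (\<exists>a\<in>V. \<exists>b\<in>V. a \<noteq> b \<and> degree V E a = d \<and> degree V E b = d) \<longrightarrow> d \<le> \<beta>"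
  shows "\<beta> \<le> n + 1 \<and> (\<beta> = n + 1 \<longrightarrow> graph_iso V E (Kbip_V n (n + 1)) Kbip_E)"
proof (cases "\<beta> \<le> n")
  case False
  obtain u v where uv: "u \<in> V" "v \<in> V" "u \<noteq> v" "degree V E u = \<beta>" "degree V E v = \<beta>"
    using assms(6) by blast
  have path3_free: "no_path3_between_equal_degrees V E"
    using assms(5) unfolding no_path3_between_equal_degrees_def .
  then interpret path3_free_pair V E u v
    using assms(2) uv degrees_differ_if_path3[OF path3_free uv(1-3)] by unfold_locales auto
  have "2 * (n ^ 2 + n) \<le> card (arcs V E)"
    using assms(4) card_arcs_eq_twice_card_edges[OF assms(2)] by simp
  then have "degree V E u = n + 1 \<and> graph_iso V E (Kbip_V n (n + 1)) Kbip_E"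
    using degree_eq_and_complete_bipartite[OF path3_free _ assms(1,3)] uv(4,5) False by simp
  then show ?thesis
    using uv(4) by simp
qed simp

end
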